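(* Fix $\beta>2$ and let $F_\beta(\mathbf{x},r)$, $r_1^\beta<r_2^\beta$, $\boldsymbol{\sigma}_0^\beta(r)$, $\boldsymbol{\sigma}_1^\beta(r)$, $\mathbf{p}^\beta(r)$ be as in the context. Let $h_0^\beta(r)=F_\beta(\boldsymbol{\sigma}_0^\beta(r),r)$ and $h_1^\beta(r)=F_\beta(\boldsymbol{\sigma}_1^\beta(r),r)$ if $r\in(0,r_1^\beta)$, $h_1^\beta(r)=F_\beta(\mathbf{p}^\beta(r),r)$ if $r\in(r_1^\beta,r_2^\beta)$. Then $h_0^\beta(r)<h_1^\beta(r)$ for all $r\in(0,r_1^\beta)\cup(r_1^\beta,r_2^\beta)$.
   Context: $\Xi=\{(x_1,x_2): x_1,x_2\ge0,\ x_1+x_2\le1\}$, $x_0=1-x_1-x_2$, $\mathbf{v}_k=(\cos(2\pi k/3),\sin(2\pi k/3))$, $F_\beta(\mathbf{x},r)=-\frac12|\sum_{k=0}^2x_k\mathbf{v}_k|^2+\frac1\beta\sum_{k=0}^2x_k\log(3x_k)+r\,x_0-\frac r2(x_1+x_2)$ (external field of magnitude $r$, angle $\pi$). Let $h(t)=-3t(1-2t)\log\frac{1-2t}{t}-3t+1$, $f_r(t)=\frac{2}{3(1-r-3t)}\log\frac{1-2t}{t}$, $k_r=(1-r)/3$; for $0<r<1$, $m_0(r)$ is the unique solution in $(0,k_r)$ of $h(t)=r$; $r_2^\beta$ is the unique $r\in(0,1)$ with $f_r(m_0(r))=\beta$; $r_1^\beta=1-\frac2\beta-\frac{2}{3\beta}\log(\frac{3\beta}2-2)$.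 For every $r>0$, $q_\beta(r)$ is the unique solution of $f_r(t)=\beta$ in $(1/3,1/2)$ and $\boldsymbol{\sigma}_0^\beta(r)=(q_\beta(r),q_\beta(r))$; for $r\in(0,r_2^\beta)$, $u_\beta(r)$ is the unique solution of $f_r(t)=\beta$ in $(m_0(r),k_r)$ and $\mathbf{p}^\beta(r)=(u_\beta(r),u_\beta(r))$. Let $G_\beta(x)=\frac1\beta\log x-\frac32x$, $l_\beta=2/(3\beta)$, $g_\beta=G_\beta(l_\beta)$; for $y<g_\beta$, $H_\beta(y)<l_\beta<K_\beta(y)$ solve $G_\beta(x)=y$, and $H_\beta(g_\beta)=K_\beta(g_\beta)=l_\beta$. For $r\le r_1^\beta$, $y_1^\beta(r)$ is the unique $y\le g_\beta$ with $K_\beta(y-3r/2)+H_\beta(y)+K_\beta(y)=1$, and $\boldsymbol{\sigma}_1^\beta(r)=(K_\beta(y_1^\beta(r)),H_\beta(y_1^\beta(r)))$. *)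

theory Defs
  imports Complex_Main
begin

definition vv :: "nat \<Rightarrow> real \<times> real" where
  "vv k = (cos (2 * pi * real k / 3), sin (2 * pi * real k / 3))"

definition Fbeta :: "real \<Rightarrow> real \<times> real \<Rightarrow> real \<Rightarrow> real" where
  "Fbeta \<beta> x r =
     (let x1 = fst x; x2 = snd x; x0 = 1 - x1 - x2;
          xs = (\<lambda>k::nat. if k = 0 then x0 else if k = 1 then x1 else x2);
          s1 = (\<Sum>k<3. xs k * fst (vv k));
          s2 = (\<Sum>k<3. xs k * snd (vv k))
      in - (1/2) * (s1\<^sup>2 + s2\<^sup>2) + (1/\<beta>) * (\<Sum>k<3. xs k * ln (3 * xs k))
         + r * x0 - (r/2) * (x1 + x2))"

definition hfun :: "real \<Rightarrow> real" where
  "hfun t = - 3 * t * (1 - 2*t) * ln ((1 - 2*t) / t) - 3 * t + 1"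

definition ffun :: "real \<Rightarrow> real \<Rightarrow> real" where
  "ffun r t = 2 / (3 * (1 - r - 3*t)) * ln ((1 - 2*t) / t)"

definition kr :: "real \<Rightarrow> real" where
  "kr r = (1 - r) / 3"

definition m0 :: "real \<Rightarrow> real" where
  "m0 r = (THE t. 0 < t \<and> t < kr r \<and> hfun t = r)"

definition r2 :: "real \<Rightarrow> real" where
  "r2 \<beta> = (THE r. 0 < r \<and> r < 1 \<and> ffun r (m0 r) = \<beta>)"

definition r1 :: "real \<Rightarrow> real" where
  "r1 \<beta> = 1 - 2/\<beta> - 2/(3*\<beta>) * ln (3*\<beta>/2 - 2)"

definition qb :: "real \<Rightarrow> real \<Rightarrow> real" where
  "qb \<beta> r = (THE t. 1/3 < t \<and> t < 1/2 \<and> ffun r t = \<beta>)"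

definition sigma0 :: "real \<Rightarrow> real \<Rightarrow> real \<times> real" where
  "sigma0 \<beta> r = (qb \<beta> r, qb \<beta> r)"

definition ub :: "real \<Rightarrow> real \<Rightarrow> real" where
  "ub \<beta> r = (THE t. m0 r < t \<and> t < kr r \<and> ffun r t = \<beta>)"

definition pb :: "real \<Rightarrow> real \<Rightarrow> real \<times> real" where
  "pb \<beta> r = (ub \<beta> r, ub \<beta> r)"

definition Gb :: "real \<Rightarrow> real \<Rightarrow> real" where
  "Gb \<beta> x = (1/\<beta>) * ln x - 3/2 * x"

definition lb :: "real \<Rightarrow> real" where
  "lb \<beta> = 2 / (3*\<beta>)"

definition gb :: "real \<Rightarrow> real" where
  "gb \<beta> = Gb \<beta> (lb \<beta>)"

definition Hb :: "real \<Rightarrow> real \<Rightarrow> real" where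
  "Hb \<beta> y = (THE x. 0 < x \<and> x \<le> lb \<beta> \<and> Gb \<beta> x = y)"

definition Kb :: "real \<Rightarrow> real \<Rightarrow> real" where
  "Kb \<beta> y = (THE x. lb \<beta> \<le> x \<and> Gb \<beta> x = y)"

definition y1 :: "real \<Rightarrow> real \<Rightarrow> real" where
  "y1 \<beta> r = (THE y. y \<le> gb \<beta> \<and> Kb \<beta> (y - 3*r/2) + Hb \<beta> y + Kb \<beta> y = 1)"

definition sigma1 :: "real \<Rightarrow> real \<Rightarrow> real \<times> real" where
  "sigma1 \<beta> r = (Kb \<beta> (y1 \<beta> r), Hb \<beta> (y1 \<beta> r))"

end

theory Submission
  imports Defs
begin

text \<open>Up to a constant, \<open>Fbeta\<close> is \<open>Pb x0 + Pb x1 + Pb x2 + 3 r/2 x0\<close> with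
  \<open>Pb x = x ln x/\<beta> - 3/4 x\<^sup>2\<close>, whose derivative is \<open>Gb x + 1/\<beta>\<close>. On the diagonal
  \<open>x1 = x2 = t\<close> this is a function \<open>phi t\<close> with \<open>phi' = 3 (1 - r - 3t) (1 - ffun r t/\<beta>)\<close>,
  so \<open>sigma0 = (q, q)\<close> minimises \<open>phi\<close> on \<open>(1/3, 1/2)\<close>. For \<open>r1 < r < r2\<close> the point
  \<open>pb = (u, u)\<close> lies on the same diagonal and \<open>phi' < 0\<close> on \<open>(u, q)\<close>.
  For \<open>r < r1\<close>, \<open>sigma1 = (Kb y, Hb y)\<close> with \<open>x0 = Kb (y - 3 r/2)\<close>: replacing \<open>x0\<close> and \<open>x1\<close>
  by their mean \<open>t\<close> does not increase the energy, since both lie on the decreasing branch of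
  \<open>Gb\<close>; exchanging \<open>x0\<close> and \<open>x2\<close> then gains \<open>3 r/2 (t - Hb y) > 0\<close> and lands on the diagonal
  with \<open>t \<in> (1/3, 1/2)\<close>.\<close>

definition Pb :: "real \<Rightarrow> real \<Rightarrow> real" where
  "Pb \<beta> x = x * ln x / \<beta> - 3/4 * x^2"

lemma vv_values: "vv 0 = (1, 0)" "vv (Suc 0) = (-1/2, sqrt 3/2)" "vv 2 = (-1/2, - sqrt 3/2)"
proof -
  have two_thirds: "2 * pi * real 2 / 3 = pi/3 + pi" by simp
  show "vv 0 = (1, 0)" by (simp add: vv_def)
  show "vv (Suc 0) = (-1/2, sqrt 3/2)" by (simp add: vv_def cos_120 sin_120)
  show "vv 2 = (-1/2, - sqrt 3/2)"
    unfolding vv_def two_thirds by (simp only: cos_add sin_add cos_60 sin_60 cos_pi sin_pi) simp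
qed

lemma Fbeta_eq_Pb_sum:
  assumes "0 < x1" "0 < x2" "0 < 1 - x1 - x2"
  shows "Fbeta \<beta> (x1, x2) r = 1/4 - r/2 + ln 3/\<beta> + Pb \<beta> (1-x1-x2) + Pb \<beta> x1 + Pb \<beta> x2
           + 3*r/2 * (1-x1-x2)"
proof -
  define x0 where "x0 = 1 - x1 - x2"
  have "0 < x0" using assms x0_def by simp
  let ?xs = "\<lambda>k::nat. if k = 0 then x0 else if k = 1 then x1 else x2"
  have sum3: "(\<Sum>k<3. f k) = f 0 + f (Suc 0) + (f 2 :: real)" for f :: "nat \<Rightarrow> real"
    by (simp add: eval_nat_numeral)
  have ln3x: "ln (3*x) = ln 3 + ln x" if "0 < x" for x :: real
    using that by (simp add: ln_mult)
  have s1: "(\<Sum>k<3. ?xs k * fst (vv k)) = x0 - (x1+x2)/2"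
    unfolding sum3 by (simp add: vv_values field_simps)
  have s2_sum: "(\<Sum>k<3. ?xs k * snd (vv k)) = sqrt 3/2 * (x1-x2)"
    unfolding sum3 by (simp add: vv_values algebra_simps)
  have s2: "(\<Sum>k<3. ?xs k * snd (vv k))\<^sup>2 = 3/4 * (x1-x2)^2"
    unfolding s2_sum by (simp add: power_mult_distrib power_divide)
  have s3: "(\<Sum>k<3. ?xs k * ln (3 * ?xs k)) = ln 3 + x0 * ln x0 + x1 * ln x1 + x2 * ln x2"
    unfolding sum3 using ln3x[OF \<open>0 < x0\<close>] ln3x[OF assms(1)] ln3x[OF assms(2)]
    by (simp add: x0_def algebra_simps)
  have "Fbeta \<beta> (x1, x2) r = - (1/2) * ((x0 - (x1+x2)/2)^2 + 3/4*(x1-x2)^2)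
     + (1/\<beta>) * (ln 3 + x0 * ln x0 + x1 * ln x1 + x2 * ln x2) + r * x0 - (r/2) * (x1 + x2)"
    unfolding Fbeta_def Let_def fst_conv snd_conv x0_def[symmetric] s1 s2 s3 by simp
  also have "\<dots> = 1/4 - r/2 + ln 3/\<beta> + Pb \<beta> x0 + Pb \<beta> x1 + Pb \<beta> x2 + 3*r/2 * x0"
    unfolding Pb_def x0_def
    by (simp add: power2_eq_square algebra_simps add_divide_distrib diff_divide_distrib)
  finally show ?thesis unfolding x0_def .
qed

lemma Pb_has_derivative: "0 < x \<Longrightarrow> \<beta> \<noteq> 0 \<Longrightarrow> DERIV (Pb \<beta>) x :> Gb \<beta> x + 1/\<beta>"
  unfolding Pb_def Gb_def
  by (auto intro!: derivative_eq_intros simp: power2_eq_square field_simps)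

lemma lb_pos: "\<beta> > 0 \<Longrightarrow> 0 < lb \<beta>"
  by (simp add: lb_def)

lemma lb_lt_third: "\<beta> > 2 \<Longrightarrow> 3 * lb \<beta> < 1"
  by (simp add: lb_def field_simps)

lemma Gb_diff: "Gb \<beta> x' - Gb \<beta> x = (ln x' - ln x)/\<beta> - 3/2*(x' - x)"
  unfolding Gb_def by (simp add: algebra_simps diff_divide_distrib)

lemma Gb_strict_mono_below_lb:
  assumes "\<beta> > 0" "0 < x" "x < x'" "x' \<le> lb \<beta>"
  shows "Gb \<beta> x < Gb \<beta> x'"
proof -
  have "(x' - x)/lb \<beta> \<le> (x' - x)/x'"
    using assms lb_pos[of \<beta>] by (intro divide_left_mono) auto
  also have "\<dots> < ln x' - ln x"
  proof -
    have "ln x - ln x' < (x - x')/x'" using ln_diff_less[of x x'] assms by simp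
    moreover have "(x - x')/x' = - ((x' - x)/x')" by (metis minus_diff_eq minus_divide_left)
    ultimately show ?thesis by linarith
  qed
  finally have "(x' - x)/lb \<beta>/\<beta> < (ln x' - ln x)/\<beta>"
    by (rule divide_strict_right_mono) (use assms in auto)
  moreover have "(x' - x)/lb \<beta>/\<beta> = 3/2*(x' - x)" using assms by (simp add: lb_def)
  ultimately show ?thesis using Gb_diff[of \<beta> x' x] by linarith
qed

lemma Gb_strict_antimono_above_lb:
  assumes "\<beta> > 0" "lb \<beta> \<le> x" "x < x'"
  shows "Gb \<beta> x' < Gb \<beta> x"
proof -
  have "0 < x" using assms lb_pos[of \<beta>] by linarith
  have "ln x' - ln x < (x' - x)/x" using ln_diff_less[of x' x] assms \<open>0 < x\<close> by simp
  also have "\<dots> \<le> (x' - x)/lb \<beta>" using assms lb_pos[of \<beta>] by (intro divide_left_mono) auto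
  finally have "(ln x' - ln x)/\<beta> < (x' - x)/lb \<beta>/\<beta>"
    by (rule divide_strict_right_mono) (use assms in auto)
  moreover have "(x' - x)/lb \<beta>/\<beta> = 3/2*(x' - x)" using assms by (simp add: lb_def)
  ultimately show ?thesis using Gb_diff[of \<beta> x' x] by linarith
qed

lemma Gb_le_gb: "\<beta> > 0 \<Longrightarrow> 0 < x \<Longrightarrow> Gb \<beta> x \<le> gb \<beta>"
  using Gb_strict_mono_below_lb[of \<beta> x "lb \<beta>"] Gb_strict_antimono_above_lb[of \<beta> "lb \<beta>" x]
  unfolding gb_def by (cases x "lb \<beta>" rule: linorder_cases) auto

lemma continuous_on_Gb: "0 < a \<Longrightarrow> continuous_on {a..b} (Gb \<beta>)"
  unfolding Gb_def by (intro continuous_intros) auto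

lemma Gb_root_below_lb_exists:
  assumes "\<beta> > 0" "y \<le> gb \<beta>"
  shows "\<exists>x. 0 < x \<and> x \<le> lb \<beta> \<and> Gb \<beta> x = y"
proof -
  define e where "e = min (lb \<beta>) (exp (\<beta>*y))"
  have "0 < e" using lb_pos[OF assms(1)] by (simp add: e_def)
  have "ln e \<le> \<beta> * y" unfolding e_def
    by (metis \<open>0 < e\<close> e_def exp_le_cancel_iff exp_ln min.cobounded2)
  hence "ln e / \<beta> \<le> y" using assms by (simp add: divide_le_eq mult.commute)
  hence "Gb \<beta> e \<le> y" using \<open>0 < e\<close> by (simp add: Gb_def)
  then obtain x where "e \<le> x" "x \<le> lb \<beta>" "Gb \<beta> x = y"
    using IVT'[of "Gb \<beta>" e y "lb \<beta>"] assms continuous_on_Gb[OF \<open>0 < e\<close>]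
    unfolding gb_def e_def by auto
  thus ?thesis using \<open>0 < e\<close> by (intro exI[of _ x]) auto
qed

lemma Gb_root_above_lb_exists:
  assumes "\<beta> > 2" "y \<le> gb \<beta>"
  shows "\<exists>x. lb \<beta> \<le> x \<and> Gb \<beta> x = y"
proof -
  define M where "M = max (lb \<beta>) (\<bar>y\<bar> + 1)"
  have M: "0 < M" "lb \<beta> \<le> M" "\<bar>y\<bar> + 1 \<le> M" by (auto simp: M_def)
  have "ln M / \<beta> \<le> M / \<beta>" using ln_le_minus_one[of M] M assms by (intro divide_right_mono) auto
  moreover have "M/\<beta> \<le> M/2" using M assms by (intro divide_left_mono) auto
  moreover have "Gb \<beta> M = ln M / \<beta> - 3/2 * M" by (simp add: Gb_def)
  ultimately have "Gb \<beta> M \<le> y" using M by linarith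
  then obtain x where "lb \<beta> \<le> x" "Gb \<beta> x = y"
    using IVT2'[of "Gb \<beta>" M y "lb \<beta>"] assms M continuous_on_Gb[OF lb_pos]
    unfolding gb_def by auto
  thus ?thesis by auto
qed

lemma Hb:
  assumes "\<beta> > 0" "y \<le> gb \<beta>"
  shows "0 < Hb \<beta> y" "Hb \<beta> y \<le> lb \<beta>" "Gb \<beta> (Hb \<beta> y) = y"
proof -
  have "x = x'" if "0 < x" "x \<le> lb \<beta>" "0 < x'" "x' \<le> lb \<beta>" "Gb \<beta> x = Gb \<beta> x'" for x x'
    using Gb_strict_mono_below_lb[OF assms(1), of x x'] Gb_strict_mono_below_lb[OF assms(1), of x' x] that
    by (cases x x' rule: linorder_cases) auto
  hence "\<exists>!x. 0 < x \<and> x \<le> lb \<beta> \<and> Gb \<beta> x = y"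
    using Gb_root_below_lb_exists[OF assms] by blast
  hence "0 < Hb \<beta> y \<and> Hb \<beta> y \<le> lb \<beta> \<and> Gb \<beta> (Hb \<beta> y) = y"
    unfolding Hb_def by (rule theI')
  thus "0 < Hb \<beta> y" "Hb \<beta> y \<le> lb \<beta>" "Gb \<beta> (Hb \<beta> y) = y" by auto
qed

lemma Kb:
  assumes "\<beta> > 2" "y \<le> gb \<beta>"
  shows "lb \<beta> \<le> Kb \<beta> y" "Gb \<beta> (Kb \<beta> y) = y"
proof -
  have "x = x'" if "lb \<beta> \<le> x" "lb \<beta> \<le> x'" "Gb \<beta> x = Gb \<beta> x'" for x x'
    using Gb_strict_antimono_above_lb[of \<beta> x x'] Gb_strict_antimono_above_lb[of \<beta> x' x] that assms(1)
    by (cases x x' rule: linorder_cases) auto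
  hence "\<exists>!x. lb \<beta> \<le> x \<and> Gb \<beta> x = y"
    using Gb_root_above_lb_exists[OF assms] by blast
  hence "lb \<beta> \<le> Kb \<beta> y \<and> Gb \<beta> (Kb \<beta> y) = y"
    unfolding Kb_def by (rule theI')
  thus "lb \<beta> \<le> Kb \<beta> y" "Gb \<beta> (Kb \<beta> y) = y" by auto
qed

lemma Hb_Gb: "\<beta> > 0 \<Longrightarrow> 0 < x \<Longrightarrow> x \<le> lb \<beta> \<Longrightarrow> Hb \<beta> (Gb \<beta> x) = x"
  using Hb[of \<beta> "Gb \<beta> x"] Gb_le_gb[of \<beta> x] Gb_strict_mono_below_lb[of \<beta> x "Hb \<beta> (Gb \<beta> x)"]
    Gb_strict_mono_below_lb[of \<beta> "Hb \<beta> (Gb \<beta> x)" x]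
  by (cases x "Hb \<beta> (Gb \<beta> x)" rule: linorder_cases) auto

lemma Kb_Gb: "\<beta> > 2 \<Longrightarrow> lb \<beta> \<le> x \<Longrightarrow> Kb \<beta> (Gb \<beta> x) = x"
  using Kb[of \<beta> "Gb \<beta> x"] Gb_le_gb[of \<beta> x] lb_pos[of \<beta>]
    Gb_strict_antimono_above_lb[of \<beta> x "Kb \<beta> (Gb \<beta> x)"]
    Gb_strict_antimono_above_lb[of \<beta> "Kb \<beta> (Gb \<beta> x)" x]
  by (cases x "Kb \<beta> (Gb \<beta> x)" rule: linorder_cases) auto

lemma Hb_Kb_gb: "\<beta> > 2 \<Longrightarrow> Hb \<beta> (gb \<beta>) = lb \<beta>" "\<beta> > 2 \<Longrightarrow> Kb \<beta> (gb \<beta>) = lb \<beta>"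
  using Hb_Gb[of \<beta> "lb \<beta>"] Kb_Gb[of \<beta> "lb \<beta>"] lb_pos[of \<beta>] unfolding gb_def by auto

lemma Hb_strict_mono:
  assumes "\<beta> > 0" "y < y'" "y' \<le> gb \<beta>"
  shows "Hb \<beta> y < Hb \<beta> y'"
proof (rule ccontr)
  assume "\<not> ?thesis"
  hence "Gb \<beta> (Hb \<beta> y') \<le> Gb \<beta> (Hb \<beta> y)"
    using Gb_strict_mono_below_lb[of \<beta> "Hb \<beta> y'" "Hb \<beta> y"] Hb[of \<beta> y] Hb[of \<beta> y'] assms
    by (cases "Hb \<beta> y' = Hb \<beta> y") auto
  thus False using Hb[of \<beta> y] Hb[of \<beta> y'] assms by simp
qed

lemma Kb_strict_antimono:
  assumes "\<beta> > 2" "y < y'" "y' \<le> gb \<beta>"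
  shows "Kb \<beta> y' < Kb \<beta> y"
proof (rule ccontr)
  assume "\<not> ?thesis"
  hence "Gb \<beta> (Kb \<beta> y') \<le> Gb \<beta> (Kb \<beta> y)"
    using Gb_strict_antimono_above_lb[of \<beta> "Kb \<beta> y" "Kb \<beta> y'"] Kb[of \<beta> y] Kb[of \<beta> y'] assms
    by (cases "Kb \<beta> y' = Kb \<beta> y") auto
  thus False using Kb[of \<beta> y] Kb[of \<beta> y'] assms by simp
qed

lemma continuous_on_Hb:
  assumes "\<beta> > 0" "c \<le> gb \<beta>"
  shows "continuous_on {c..gb \<beta>} (Hb \<beta>)"
proof -
  define e where "e = Hb \<beta> c"
  have "0 < e" using Hb[OF assms] e_def by simp
  have "continuous_on (Gb \<beta> ` {e..lb \<beta>}) (Hb \<beta>)"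
    by (rule continuous_on_inv[OF continuous_on_Gb[OF \<open>0 < e\<close>]])
      (use Hb_Gb[OF assms(1)] \<open>0 < e\<close> in auto)
  moreover have "{c..gb \<beta>} \<subseteq> Gb \<beta> ` {e..lb \<beta>}"
  proof
    fix y assume y: "y \<in> {c..gb \<beta>}"
    have "e \<le> Hb \<beta> y" using Hb_strict_mono[OF assms(1), of c y] y e_def by (cases "c = y") auto
    moreover have "Hb \<beta> y \<le> lb \<beta>" "y = Gb \<beta> (Hb \<beta> y)" using Hb[OF assms(1)] y by auto
    ultimately show "y \<in> Gb \<beta> ` {e..lb \<beta>}" by auto
  qed
  ultimately show ?thesis using continuous_on_subset by blast
qed

lemma continuous_on_Kb:
  assumes "\<beta> > 2" "c \<le> gb \<beta>"
  shows "continuous_on {c..gb \<beta>} (Kb \<beta>)"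
proof -
  define e where "e = Kb \<beta> c"
  have "continuous_on (Gb \<beta> ` {lb \<beta>..e}) (Kb \<beta>)"
    by (rule continuous_on_inv[OF continuous_on_Gb[OF lb_pos]]) (use Kb_Gb[OF assms(1)] assms in auto)
  moreover have "{c..gb \<beta>} \<subseteq> Gb \<beta> ` {lb \<beta>..e}"
  proof
    fix y assume y: "y \<in> {c..gb \<beta>}"
    have "Kb \<beta> y \<le> e" using Kb_strict_antimono[OF assms(1), of c y] y e_def by (cases "c = y") auto
    moreover have "lb \<beta> \<le> Kb \<beta> y" "y = Gb \<beta> (Kb \<beta> y)" using Kb[OF assms(1)] y by auto
    ultimately show "y \<in> Gb \<beta> ` {lb \<beta>..e}" by auto
  qed
  ultimately show ?thesis using continuous_on_subset by blast
qed

text \<open>Twice the ratio of the arithmetic to the logarithmic mean of \<open>1\<close> and \<open>x\<close>.\<close>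

definition log_mean_ratio :: "real \<Rightarrow> real" where
  "log_mean_ratio x = (x + 1) * ln x / (x - 1)"

lemma log_mean_ratio_gt_2:
  assumes "1 < x"
  shows "log_mean_ratio x > 2"
proof -
  let ?v = "\<lambda>x. (x + 1) * ln x - 2 * (x - 1)"
  have "?v 1 < ?v x"
  proof (rule DERIV_pos_imp_increasing_open[OF assms])
    fix t :: real assume t: "1 < t" "t < x"
    have "DERIV ?v t :> ln t + (t + 1)/t - 2" using t by (auto intro!: derivative_eq_intros)
    moreover have "ln t > 1 - 1/t"
      using ln_diff_less[of 1 t] t by (simp add: field_simps)
    hence "ln t + (t + 1)/t - 2 > 0" using t by (simp add: field_simps)
    ultimately show "\<exists>y. DERIV ?v t :> y \<and> y > 0" by blast
  qed (intro continuous_intros, auto)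
  thus ?thesis using assms unfolding log_mean_ratio_def by (simp add: field_simps)
qed

lemma log_mean_ratio_strict_mono:
  assumes "1 < x" "x < x'"
  shows "log_mean_ratio x < log_mean_ratio x'"
proof (rule DERIV_pos_imp_increasing[OF assms(2)])
  fix t assume "x \<le> t" "t \<le> x'"
  hence "1 < t" using assms by simp
  let ?w = "\<lambda>x. x - 1/x - 2 * ln x"
  have "?w 1 < ?w t"
  proof (rule DERIV_pos_imp_increasing_open[OF \<open>1 < t\<close>])
    fix s :: real assume s: "1 < s" "s < t"
    have "DERIV ?w s :> (1 - 1/s)^2" using s
      by (auto intro!: derivative_eq_intros simp: power2_eq_square field_simps)
    thus "\<exists>y. DERIV ?w s :> y \<and> y > 0" using s by auto
  qed (intro continuous_intros, auto)
  hence w: "t - 1/t - 2 * ln t > 0" by simp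
  have "DERIV log_mean_ratio t :> ((ln t + (t + 1)/t) * (t - 1) - (t + 1) * ln t)/(t - 1)^2"
    unfolding log_mean_ratio_def using \<open>1 < t\<close>
    by (auto intro!: derivative_eq_intros simp: power2_eq_square)
  moreover have "((ln t + (t + 1)/t) * (t - 1) - (t + 1) * ln t)/(t - 1)^2 = (t - 1/t - 2 * ln t)/(t - 1)^2"
    using \<open>1 < t\<close> by (simp add: field_simps)
  ultimately show "\<exists>y. DERIV log_mean_ratio t :> y \<and> y > 0" using w \<open>1 < t\<close> by fastforce
qed

lemma Hb_lt_lb_lt_Kb:
  assumes "\<beta> > 2" "y < gb \<beta>"
  shows "Hb \<beta> y < lb \<beta>" "lb \<beta> < Kb \<beta> y"
  using Hb[of \<beta> y] Kb[of \<beta> y] assms unfolding gb_def by (auto simp: order.order_iff_strict)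

text \<open>Equal values of \<open>Gb\<close> at \<open>Hb y\<close> and \<open>Kb y\<close> mean \<open>ln (Kb y / Hb y) = (Kb y - Hb y) / lb\<close>.\<close>

lemma Kb_plus_Hb_eq:
  assumes "\<beta> > 2" "y < gb \<beta>"
  shows "Kb \<beta> y + Hb \<beta> y = lb \<beta> * log_mean_ratio (Kb \<beta> y / Hb \<beta> y)"
proof -
  define h k where "h = Hb \<beta> y" and "k = Kb \<beta> y"
  have "0 < h" "h < k" "0 < lb \<beta>"
    using Hb[of \<beta> y] Hb_lt_lb_lt_Kb[OF assms] lb_pos[of \<beta>] assms unfolding h_def k_def by auto
  have "Gb \<beta> k - Gb \<beta> h = 0" using Hb[of \<beta> y] Kb[of \<beta> y] assms unfolding h_def k_def by simp
  hence "ln k - ln h = 3/2 * (k - h) * \<beta>" using assms by (simp add: Gb_diff field_simps)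
  hence L: "ln (k/h) = (k - h)/lb \<beta>"
    using \<open>0 < h\<close> \<open>h < k\<close> assms by (simp add: ln_div lb_def field_simps)
  have "log_mean_ratio (k/h) = (k + h) * ln (k/h)/(k - h)"
    unfolding log_mean_ratio_def using \<open>0 < h\<close> \<open>h < k\<close> by (simp add: field_simps)
  also have "\<dots> = (k + h)/lb \<beta>" unfolding L using \<open>h < k\<close> \<open>0 < lb \<beta>\<close> by (simp add: field_simps)
  finally show ?thesis using \<open>0 < lb \<beta>\<close> unfolding h_def k_def by simp
qed

lemma Kb_plus_Hb_strict_antimono:
  assumes "\<beta> > 2" "y < y'" "y' \<le> gb \<beta>"
  shows "Kb \<beta> y' + Hb \<beta> y' < Kb \<beta> y + Hb \<beta> y"
proof -
  have ratio_gt_1: "1 < Kb \<beta> z / Hb \<beta> z" if "z < gb \<beta>" for z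
    using Hb[of \<beta> z] Hb_lt_lb_lt_Kb[of \<beta> z] assms that by simp
  have "y < gb \<beta>" using assms by simp
  show ?thesis
  proof (cases "y' = gb \<beta>")
    case True
    thus ?thesis using Hb_Kb_gb[OF assms(1)] Kb_plus_Hb_eq[OF assms(1) \<open>y < gb \<beta>\<close>]
        log_mean_ratio_gt_2[OF ratio_gt_1[OF \<open>y < gb \<beta>\<close>]] lb_pos[of \<beta>] assms(1) by simp
  next
    case False
    hence "y' < gb \<beta>" using assms by simp
    have "Kb \<beta> y' / Hb \<beta> y' < Kb \<beta> y / Hb \<beta> y'"
      using Kb_strict_antimono[OF assms] Hb[of \<beta> y'] assms by (simp add: divide_strict_right_mono)
    also have "\<dots> < Kb \<beta> y / Hb \<beta> y"
      using Hb_strict_mono[of \<beta> y y'] Hb[of \<beta> y] Kb[of \<beta> y] lb_pos[of \<beta>] assms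
      by (intro divide_strict_left_mono) auto
    finally show ?thesis
      using Kb_plus_Hb_eq[OF assms(1) \<open>y < gb \<beta>\<close>] Kb_plus_Hb_eq[OF assms(1) \<open>y' < gb \<beta>\<close>]
        log_mean_ratio_strict_mono[OF ratio_gt_1[OF \<open>y' < gb \<beta>\<close>]] lb_pos[of \<beta>] assms(1) by simp
  qed
qed

lemma r1_pos:
  assumes "\<beta> > 2"
  shows "0 < r1 \<beta>"
proof -
  define z where "z = 3*\<beta>/2 - 2"
  have "ln z < z - 1" using ln_diff_less[of z 1] assms z_def by simp
  hence "2/(3*\<beta>) * ln z < 2/(3*\<beta>) * (z - 1)" using assms by (intro mult_strict_left_mono) auto
  moreover have "2/(3*\<beta>) * (z - 1) = 1 - 2/\<beta>" using assms unfolding z_def by (simp add: field_simps)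
  ultimately show ?thesis unfolding r1_def z_def[symmetric] by simp
qed

text \<open>\<open>r1\<close> is the field strength at which the sum \<open>Kb (y - 3 r/2) + Hb y + Kb y\<close> equals \<open>1\<close> at \<open>y = gb\<close>.\<close>

lemma gb_minus_Gb_eq_r1:
  assumes "\<beta> > 2"
  shows "gb \<beta> - Gb \<beta> (1 - 2 * lb \<beta>) = 3/2 * r1 \<beta>"
proof -
  define z where "z = 3*\<beta>/2 - 2"
  have "1 - 2 * lb \<beta> = lb \<beta> * z" unfolding z_def lb_def using assms by (simp add: field_simps)
  hence "ln (1 - 2 * lb \<beta>) = ln (lb \<beta>) + ln z"
    using lb_pos[of \<beta>] assms z_def by (simp add: ln_mult)
  hence "gb \<beta> - Gb \<beta> (1 - 2 * lb \<beta>) = - ln z/\<beta> + 3/2 * (1 - 2 * lb \<beta>) - 3/2 * lb \<beta>"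
    unfolding gb_def Gb_def by (simp add: algebra_simps diff_divide_distrib add_divide_distrib)
  also have "\<dots> = 3/2 * r1 \<beta>"
    unfolding r1_def z_def[symmetric] using assms unfolding lb_def by (simp add: field_simps)
  finally show ?thesis .
qed

definition HK_sum :: "real \<Rightarrow> real \<Rightarrow> real \<Rightarrow> real" where
  "HK_sum \<beta> r y = Kb \<beta> (y - 3*r/2) + Hb \<beta> y + Kb \<beta> y"

lemma HK_sum_strict_antimono:
  assumes "\<beta> > 2" "0 \<le> r" "y < y'" "y' \<le> gb \<beta>"
  shows "HK_sum \<beta> r y' < HK_sum \<beta> r y"
  using Kb_strict_antimono[of \<beta> "y - 3*r/2" "y' - 3*r/2"] Kb_plus_Hb_strict_antimono[of \<beta> y y'] assms
  unfolding HK_sum_def by simp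

lemma HK_sum_gb_lt_1:
  assumes "\<beta> > 2" "0 < r" "r < r1 \<beta>"
  shows "HK_sum \<beta> r (gb \<beta>) < 1"
proof -
  let ?k = "Kb \<beta> (gb \<beta> - 3*r/2)"
  have "Gb \<beta> (1 - 2 * lb \<beta>) < gb \<beta> - 3*r/2" using gb_minus_Gb_eq_r1[OF assms(1)] assms by simp
  moreover have "Gb \<beta> ?k = gb \<beta> - 3*r/2" "lb \<beta> \<le> ?k" using Kb[of \<beta> "gb \<beta> - 3*r/2"] assms by auto
  ultimately have "\<not> 1 - 2 * lb \<beta> < ?k" "?k \<noteq> 1 - 2 * lb \<beta>"
    using Gb_strict_antimono_above_lb[of \<beta> "1 - 2 * lb \<beta>" ?k] lb_lt_third[OF assms(1)] assms by auto
  hence "?k < 1 - 2 * lb \<beta>" by linarith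
  thus ?thesis unfolding HK_sum_def Hb_Kb_gb[OF assms(1)] by simp
qed

lemma continuous_on_HK_sum:
  assumes "\<beta> > 2" "0 \<le> r" "c \<le> gb \<beta>"
  shows "continuous_on {c..gb \<beta>} (HK_sum \<beta> r)"
proof -
  have "continuous_on {c..gb \<beta>} (\<lambda>y. Kb \<beta> (y - 3*r/2))"
    by (rule continuous_on_compose2[OF continuous_on_Kb[of \<beta> "c - 3*r/2"]])
      (use assms in \<open>auto intro!: continuous_intros\<close>)
  thus ?thesis unfolding HK_sum_def using assms
    by (intro continuous_on_add continuous_on_Hb continuous_on_Kb) auto
qed

lemma y1:
  assumes "\<beta> > 2" "0 < r" "r < r1 \<beta>"
  shows "y1 \<beta> r \<le> gb \<beta>" "HK_sum \<beta> r (y1 \<beta> r) = 1"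
proof -
  define y0 where "y0 = Gb \<beta> 1"
  have "y0 \<le> gb \<beta>" unfolding y0_def using Gb_le_gb assms by simp
  have "Kb \<beta> y0 = 1" unfolding y0_def using Kb_Gb[of \<beta> 1] lb_lt_third[of \<beta>] assms by simp
  hence "HK_sum \<beta> r y0 > 1" unfolding HK_sum_def
    using Hb(1)[of \<beta> y0] Kb(1)[of \<beta> "y0 - 3*r/2"] lb_pos[of \<beta>] \<open>y0 \<le> gb \<beta>\<close> assms by simp
  then obtain y where y: "y \<le> gb \<beta>" "HK_sum \<beta> r y = 1"
    using IVT2'[of "HK_sum \<beta> r" "gb \<beta>" 1 y0] HK_sum_gb_lt_1[OF assms]
      continuous_on_HK_sum[of \<beta> r y0] \<open>y0 \<le> gb \<beta>\<close> assms by auto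
  have "\<exists>!y. y \<le> gb \<beta> \<and> HK_sum \<beta> r y = 1"
  proof (rule ex1I[of _ y])
    fix y' assume "y' \<le> gb \<beta> \<and> HK_sum \<beta> r y' = 1"
    thus "y' = y" using HK_sum_strict_antimono[of \<beta> r y y'] HK_sum_strict_antimono[of \<beta> r y' y] y assms
      by (cases y y' rule: linorder_cases) auto
  qed (use y in simp)
  hence "y1 \<beta> r \<le> gb \<beta> \<and> HK_sum \<beta> r (y1 \<beta> r) = 1"
    unfolding y1_def HK_sum_def[symmetric] by (rule theI')
  thus "y1 \<beta> r \<le> gb \<beta>" "HK_sum \<beta> r (y1 \<beta> r) = 1" by auto
qed

definition ln_ratio :: "real \<Rightarrow> real" where
  "ln_ratio t = ln ((1 - 2*t)/t)"

lemma ln_ratio_has_derivative: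
  assumes "0 < t" "t < 1/2"
  shows "DERIV ln_ratio t :> -1/(t*(1 - 2*t))"
proof -
  have "DERIV ln_ratio t :> (-2*t - (1 - 2*t))/t^2 / ((1 - 2*t)/t)"
    unfolding ln_ratio_def using assms by (auto intro!: derivative_eq_intros simp: power2_eq_square)
  moreover have "(-2*t - (1 - 2*t))/t^2 / ((1 - 2*t)/t) = -1/(t*(1 - 2*t))"
    using assms by (simp add: power2_eq_square field_simps)
  ultimately show ?thesis by simp
qed

lemma ln_ratio_pos: "0 < t \<Longrightarrow> t < 1/3 \<Longrightarrow> ln_ratio t > 0"
  unfolding ln_ratio_def by (subst ln_gt_zero_iff) (auto simp: field_simps)

lemma ln_ratio_neg: "1/3 < t \<Longrightarrow> t < 1/2 \<Longrightarrow> ln_ratio t < 0"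
  unfolding ln_ratio_def by (subst ln_less_zero_iff) (auto simp: field_simps)

lemma ln_ratio_third: "ln_ratio (1/3) = 0"
  unfolding ln_ratio_def by simp

lemma ln_ratio_strict_antimono:
  assumes "0 < t" "t < t'" "t' < 1/2"
  shows "ln_ratio t' < ln_ratio t"
proof (rule DERIV_neg_imp_decreasing[OF assms(2)])
  fix x assume "t \<le> x" "x \<le> t'"
  hence "0 < x" "x < 1/2" using assms by auto
  thus "\<exists>y. DERIV ln_ratio x :> y \<and> y < 0"
    using ln_ratio_has_derivative by (intro exI conjI) (auto simp: divide_neg_pos)
qed

lemma continuous_on_ln_ratio:
  assumes "0 < a" "b < 1/2"
  shows "continuous_on {a..b} ln_ratio"
proof (rule DERIV_atLeastAtMost_imp_continuous_on)
  fix x assume "a \<le> x" "x \<le> b"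
  thus "\<exists>y. DERIV ln_ratio x :> y" using ln_ratio_has_derivative[of x] assms by auto
qed

definition phi :: "real \<Rightarrow> real \<Rightarrow> real \<Rightarrow> real" where
  "phi \<beta> r t = Pb \<beta> (1 - 2*t) + 2 * Pb \<beta> t + 3*r/2 * (1 - 2*t)"

definition psi :: "real \<Rightarrow> real \<Rightarrow> real \<Rightarrow> real" where
  "psi \<beta> r t = 3/2 * (1 - r - 3*t) - ln_ratio t/\<beta>"

lemma Fbeta_diagonal:
  "0 < t \<Longrightarrow> t < 1/2 \<Longrightarrow> Fbeta \<beta> (t, t) r = 1/4 - r/2 + ln 3/\<beta> + phi \<beta> r t"
  using Fbeta_eq_Pb_sum[of t t \<beta> r] unfolding phi_def by simp

lemma phi_has_derivative:
  assumes "0 < t" "t < 1/2" "\<beta> \<noteq> 0"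
  shows "DERIV (phi \<beta> r) t :> 2 * psi \<beta> r t"
proof -
  have "0 < 1 - 2*t" using assms by simp
  have "DERIV (phi \<beta> r) t :> (Gb \<beta> (1 - 2*t) + 1/\<beta>) * (-2) + 2 * (Gb \<beta> t + 1/\<beta>) + 3*r/2 * (-2)"
  proof -
    have "DERIV (\<lambda>t. 1 - 2*t) t :> -2" by (auto intro!: derivative_eq_intros)
    from DERIV_chain2[OF Pb_has_derivative[OF \<open>0 < 1 - 2*t\<close> assms(3)] this] this
    show ?thesis
      unfolding phi_def by (intro DERIV_add DERIV_cmult Pb_has_derivative[OF assms(1,3)])
  qed
  moreover have "ln (1 - 2*t) = ln_ratio t + ln t"
    unfolding ln_ratio_def using assms by (simp add: ln_div)
  hence "(Gb \<beta> (1 - 2*t) + 1/\<beta>) * (-2) + 2 * (Gb \<beta> t + 1/\<beta>) + 3*r/2 * (-2) = 2 * psi \<beta> r t"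
    unfolding psi_def Gb_def by (simp add: algebra_simps add_divide_distrib diff_divide_distrib)
  ultimately show ?thesis by simp
qed

lemma continuous_on_phi:
  assumes "0 < a" "b < 1/2" "\<beta> \<noteq> 0"
  shows "continuous_on {a..b} (phi \<beta> r)"
proof (rule DERIV_atLeastAtMost_imp_continuous_on)
  fix x assume "a \<le> x" "x \<le> b"
  thus "\<exists>y. DERIV (phi \<beta> r) x :> y" using phi_has_derivative[of x \<beta> r] assms by auto
qed

lemma psi_eq_ffun:
  assumes "1 - r - 3*t \<noteq> 0" "\<beta> \<noteq> 0"
  shows "psi \<beta> r t = 3/2 * (1 - r - 3*t) * (1 - ffun r t/\<beta>)"
proof -
  have "ffun r t * (1 - r - 3*t) = 2/3 * ln_ratio t"
    unfolding ffun_def ln_ratio_def using assms by (simp add: field_simps)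
  thus ?thesis unfolding psi_def using assms by (simp add: field_simps)
qed

lemma hfun_has_derivative:
  assumes "0 < t" "t < 1/2"
  shows "DERIV hfun t :> -3 * (1 - 4*t) * ln_ratio t"
proof -
  have "hfun = (\<lambda>t. - 3 * t * (1 - 2*t) * ln_ratio t - 3 * t + 1)"
    unfolding hfun_def ln_ratio_def by auto
  moreover have "DERIV (\<lambda>t. - 3 * t * (1 - 2*t)) t :> -3 * (1 - 4*t)"
    by (auto intro!: derivative_eq_intros simp: algebra_simps)
  from DERIV_mult[OF this ln_ratio_has_derivative[OF assms]]
  have "DERIV (\<lambda>t. - 3 * t * (1 - 2*t) * ln_ratio t - 3 * t + 1) t :>
      -3 * (1 - 4*t) * ln_ratio t + (-1/(t*(1 - 2*t))) * (- 3 * t * (1 - 2*t)) - 3 + 0"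
    by (intro DERIV_add DERIV_diff DERIV_const) (auto intro!: derivative_eq_intros)
  moreover have "-3 * (1 - 4*t) * ln_ratio t + (-1/(t*(1 - 2*t))) * (- 3 * t * (1 - 2*t)) - 3 + 0
      = -3 * (1 - 4*t) * ln_ratio t"
    using assms by (simp add: field_simps)
  ultimately show ?thesis by simp
qed

lemma continuous_on_hfun:
  assumes "0 < a" "b < 1/2"
  shows "continuous_on {a..b} hfun"
proof (rule DERIV_atLeastAtMost_imp_continuous_on)
  fix x assume "a \<le> x" "x \<le> b"
  thus "\<exists>y. DERIV hfun x :> y" using hfun_has_derivative[of x] assms by auto
qed

lemma ffun_has_derivative:
  assumes "0 < t" "t < 1/2" "1 - r - 3*t \<noteq> 0"
  shows "DERIV (ffun r) t :> 2/(3*(1 - r - 3*t)^2) * (r - hfun t)/(t*(1 - 2*t))"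
proof -
  let ?D = "1 - r - 3*t"
  have "ffun r = (\<lambda>t. 2 / (3 * (1 - r - 3*t)) * ln_ratio t)"
    unfolding ffun_def ln_ratio_def by auto
  moreover have "DERIV (\<lambda>t. 2 / (3 * (1 - r - 3*t))) t :> 2/?D^2"
    using assms by (auto intro!: derivative_eq_intros simp: divide_simps power2_eq_square algebra_simps)
  from DERIV_mult[OF this ln_ratio_has_derivative[OF assms(1,2)]]
  have "DERIV (\<lambda>t. 2 / (3 * (1 - r - 3*t)) * ln_ratio t) t :>
      2/?D^2 * ln_ratio t + (-1/(t*(1 - 2*t))) * (2 / (3 * ?D))" .
  moreover have "2/?D^2 * ln_ratio t + (-1/(t*(1 - 2*t))) * (2 / (3 * ?D))
      = 2/(3*?D^2) * (r - hfun t)/(t*(1 - 2*t))"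
  proof -
    have gen: "2/D^2 * L + (-1/P) * (2/(3*D)) = 2/(3*D^2) * (3*P*L - D)/P"
      if "D \<noteq> 0" "P \<noteq> 0" for D P L :: real
      using that by (simp add: field_simps power2_eq_square)
    have "r - hfun t = 3 * (t*(1 - 2*t)) * ln_ratio t - ?D"
      unfolding hfun_def ln_ratio_def by (simp add: algebra_simps)
    moreover have "t*(1 - 2*t) \<noteq> 0" using assms by simp
    ultimately show ?thesis using gen[OF assms(3)] by simp
  qed
  ultimately show ?thesis by simp
qed

lemma continuous_on_ffun:
  assumes "0 < a" "b < 1/2" "\<And>t. a \<le> t \<Longrightarrow> t \<le> b \<Longrightarrow> 1 - r - 3*t \<noteq> 0"
  shows "continuous_on {a..b} (ffun r)"
proof (rule DERIV_atLeastAtMost_imp_continuous_on)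
  fix x assume "a \<le> x" "x \<le> b"
  thus "\<exists>y. DERIV (ffun r) x :> y" using ffun_has_derivative[of x r] assms by force
qed

lemma hfun_neg:
  assumes "1/4 \<le> t" "t < 1/2" "t \<noteq> 1/3"
  shows "hfun t < 0"
proof -
  have "hfun (1/3) = 0" unfolding hfun_def by simp
  moreover have "hfun t < hfun (1/3)"
  proof (cases "t < 1/3")
    case True
    show ?thesis
    proof (rule DERIV_pos_imp_increasing_open[OF True])
      fix x assume x: "t < x" "x < 1/3"
      hence "ln_ratio x > 0" "1 - 4*x < 0" using ln_ratio_pos[of x] assms by auto
      hence "-3 * (1 - 4*x) * ln_ratio x > 0" by (simp add: mult_pos_neg)
      thus "\<exists>y. DERIV hfun x :> y \<and> y > 0" using hfun_has_derivative[of x] x assms by auto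
    qed (rule continuous_on_hfun, use assms in auto)
  next
    case False
    hence "1/3 < t" using assms by simp
    show ?thesis
    proof (rule DERIV_neg_imp_decreasing_open[OF \<open>1/3 < t\<close>])
      fix x assume x: "1/3 < x" "x < t"
      hence "ln_ratio x < 0" "1 - 4*x < 0" using ln_ratio_neg[of x] assms by auto
      hence "-3 * (1 - 4*x) * ln_ratio x < 0" by (simp add: mult_neg_neg mult_pos_neg)
      thus "\<exists>y. DERIV hfun x :> y \<and> y < 0" using hfun_has_derivative[of x] x assms by auto
    qed (rule continuous_on_hfun, use assms in auto)
  qed
  ultimately show ?thesis by simp
qed

lemma hfun_strict_antimono_below_quarter:
  assumes "0 < t" "t < t'" "t' \<le> 1/4"
  shows "hfun t' < hfun t"
proof (rule DERIV_neg_imp_decreasing_open[OF assms(2)])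
  fix x assume x: "t < x" "x < t'"
  hence "ln_ratio x > 0" "1 - 4*x > 0" using ln_ratio_pos[of x] assms by auto
  hence "-3 * (1 - 4*x) * ln_ratio x < 0" by (simp only: mult.assoc[of "-3"]) simp
  moreover have "DERIV hfun x :> -3 * (1 - 4*x) * ln_ratio x"
    using hfun_has_derivative[of x] x assms by simp
  ultimately show "\<exists>y. DERIV hfun x :> y \<and> y < 0" by blast
qed (rule continuous_on_hfun, use assms in auto)

lemma kr_bounds: "0 < r \<Longrightarrow> r < 1 \<Longrightarrow> 0 < kr r \<and> kr r < 1/3"
  unfolding kr_def by auto

lemma hfun_kr_lt:
  assumes "0 < r" "r < 1"
  shows "hfun (kr r) < r"
proof -
  have "3 * kr r * (1 - 2 * kr r) * ln_ratio (kr r) > 0"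
    using ln_ratio_pos[of "kr r"] kr_bounds[OF assms] by simp
  moreover have "hfun (kr r) = (1 - 3 * kr r) - 3 * kr r * (1 - 2 * kr r) * ln_ratio (kr r)"
    unfolding hfun_def ln_ratio_def by simp
  moreover have "1 - 3 * kr r = r" by (simp add: kr_def field_simps)
  ultimately show ?thesis by simp
qed

text \<open>The witness \<open>e = s\<^sup>2\<close>, \<open>s = (1 - r)/12\<close>, uses \<open>ln_ratio e \<le> ln (1/e) \<le> 2/s\<close>.\<close>

lemma hfun_gt_near_zero:
  assumes "0 < r" "r < 1"
  shows "\<exists>e. 0 < e \<and> e < kr r \<and> r < hfun e"
proof -
  define s where "s = (1 - r)/12"
  define e where "e = s^2"
  have s: "0 < s" "s \<le> 1/12" using assms s_def by auto
  have e: "0 < e" "e \<le> s/12" unfolding e_def using s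
    by (auto simp: power2_eq_square intro: mult_left_mono)
  have "ln (1/s) \<le> 1/s - 1" using s by (intro ln_le_minus_one) auto
  hence ls: "- ln s \<le> 1/s - 1" using s by (simp add: ln_div)
  have "(1 - 2*e)/e \<le> 1/e" using e by (simp add: divide_right_mono)
  hence "ln_ratio e \<le> ln (1/e)" unfolding ln_ratio_def using e s
    by (subst ln_le_cancel_iff) (auto simp: field_simps)
  also have "ln (1/e) = -2 * ln s" using e s unfolding e_def by (simp add: ln_div ln_realpow)
  finally have L: "ln_ratio e \<le> 2/s" using ls by simp
  have "3 * e * (1 - 2*e) * ln_ratio e \<le> 3 * e * ln_ratio e"
    using e s ln_ratio_pos[of e] by (intro mult_right_mono) (auto simp: mult_left_mono)
  also have "\<dots> \<le> 3 * e * (2/s)" using L e by (intro mult_left_mono) auto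
  also have "\<dots> = 6 * s" unfolding e_def using s by (simp add: power2_eq_square)
  finally have "hfun e \<ge> 1 - 3*e - 6*s" unfolding hfun_def ln_ratio_def[symmetric] by simp
  moreover have "1 - 3*e - 6*s > r" using e s s_def by simp
  moreover have "e < kr r" using e s unfolding kr_def s_def by simp
  ultimately show ?thesis using e by (intro exI[of _ e]) auto
qed

lemma hfun_eq_r_unique:
  assumes "0 < r" "r < 1" "0 < t" "t < kr r" "hfun t = r" "0 < t'" "t' < kr r" "hfun t' = r"
  shows "t = t'"
proof -
  have "t < 1/4" "t' < 1/4" using hfun_neg[of t] hfun_neg[of t'] kr_bounds[of r] assms by force+
  thus ?thesis using hfun_strict_antimono_below_quarter[of t t'] hfun_strict_antimono_below_quarter[of t' t] assms
    by (cases t t' rule: linorder_cases) auto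
qed

lemma m0:
  assumes "0 < r" "r < 1"
  shows "0 < m0 r" "m0 r < kr r" "hfun (m0 r) = r" "m0 r < 1/4"
proof -
  obtain e where e: "0 < e" "e < kr r" "r < hfun e" using hfun_gt_near_zero[OF assms] by blast
  obtain t where t: "e \<le> t" "t \<le> kr r" "hfun t = r"
    using IVT2'[of hfun "kr r" r e] e hfun_kr_lt[OF assms] continuous_on_hfun[of e "kr r"]
      kr_bounds[OF assms] by auto
  have "t \<noteq> kr r" using t hfun_kr_lt[OF assms] by auto
  hence "\<exists>!t. 0 < t \<and> t < kr r \<and> hfun t = r"
    using t e hfun_eq_r_unique[OF assms] by (intro ex1I[of _ t]) auto
  hence "0 < m0 r \<and> m0 r < kr r \<and> hfun (m0 r) = r" unfolding m0_def by (rule theI')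
  thus "0 < m0 r" "m0 r < kr r" "hfun (m0 r) = r" by auto
  thus "m0 r < 1/4" using hfun_neg[of "m0 r"] kr_bounds[OF assms] assms by force
qed

lemma m0_eqI: "0 < r \<Longrightarrow> r < 1 \<Longrightarrow> 0 < t \<Longrightarrow> t < kr r \<Longrightarrow> hfun t = r \<Longrightarrow> m0 r = t"
  using hfun_eq_r_unique m0 by blast

lemma hfun_gt_r_below_m0: "0 < r \<Longrightarrow> r < 1 \<Longrightarrow> 0 < t \<Longrightarrow> t < m0 r \<Longrightarrow> r < hfun t"
  using hfun_strict_antimono_below_quarter[of t "m0 r"] m0[of r] by simp

lemma hfun_lt_r_above_m0:
  assumes "0 < r" "r < 1" "m0 r < t" "t < kr r"
  shows "hfun t < r"
proof (cases "t \<le> 1/4")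
  case True
  thus ?thesis using hfun_strict_antimono_below_quarter[of "m0 r" t] m0[OF assms(1,2)] assms by simp
next
  case False
  thus ?thesis using hfun_neg[of t] kr_bounds[OF assms(1,2)] assms by simp
qed

lemma ffun_derivative_sign:
  assumes "0 < t" "t < 1/2" "1 - r - 3*t \<noteq> 0"
  shows "hfun t < r \<Longrightarrow> \<exists>y. DERIV (ffun r) t :> y \<and> y > 0"
    and "r < hfun t \<Longrightarrow> \<exists>y. DERIV (ffun r) t :> y \<and> y < 0"
proof -
  have "2/(3*(1 - r - 3*t)^2) > 0" "t*(1 - 2*t) > 0" using assms by auto
  thus "hfun t < r \<Longrightarrow> \<exists>y. DERIV (ffun r) t :> y \<and> y > 0"
    and "r < hfun t \<Longrightarrow> \<exists>y. DERIV (ffun r) t :> y \<and> y < 0"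
    using ffun_has_derivative[OF assms] by (auto intro!: exI simp: mult_pos_neg divide_neg_pos)
qed

lemma ffun_strict_mono_above_third:
  assumes "0 < r" "1/3 < t" "t < t'" "t' < 1/2"
  shows "ffun r t < ffun r t'"
proof (rule DERIV_pos_imp_increasing[OF assms(3)])
  fix x assume "t \<le> x" "x \<le> t'"
  thus "\<exists>y. DERIV (ffun r) x :> y \<and> y > 0"
    using ffun_derivative_sign(1)[of x r] hfun_neg[of x] assms by auto
qed

lemma ffun_strict_antimono_below_m0:
  assumes "0 < r" "r < 1" "0 < t" "t < t'" "t' \<le> m0 r"
  shows "ffun r t' < ffun r t"
proof (rule DERIV_neg_imp_decreasing_open[OF assms(4)])
  fix x assume "t < x" "x < t'"
  thus "\<exists>y. DERIV (ffun r) x :> y \<and> y < 0"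
    using ffun_derivative_sign(2)[of x r] hfun_gt_r_below_m0[of r x] m0[OF assms(1,2)] assms
    by (auto simp: kr_def)
qed (rule continuous_on_ffun, use m0[OF assms(1,2)] assms in \<open>auto simp: kr_def\<close>)

lemma ffun_strict_mono_m0_kr:
  assumes "0 < r" "r < 1" "m0 r \<le> t" "t < t'" "t' < kr r"
  shows "ffun r t < ffun r t'"
proof (rule DERIV_pos_imp_increasing_open[OF assms(4)])
  fix x assume "t < x" "x < t'"
  thus "\<exists>y. DERIV (ffun r) x :> y \<and> y > 0"
    using ffun_derivative_sign(1)[of x r] hfun_lt_r_above_m0[of r x] m0[OF assms(1,2)] assms
    by (auto simp: kr_def)
qed (rule continuous_on_ffun, use m0[OF assms(1,2)] assms in \<open>auto simp: kr_def\<close>)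

lemma ffun_m0_le:
  assumes "0 < r" "r < 1" "0 < t" "t < kr r"
  shows "ffun r (m0 r) \<le> ffun r t"
  using ffun_strict_antimono_below_m0[of r t "m0 r"] ffun_strict_mono_m0_kr[of r "m0 r" t] assms
  by (cases t "m0 r" rule: linorder_cases) auto

lemma ffun_strict_mono_in_r:
  assumes "0 < r" "r < r'" "r' < 1" "0 < t" "t < kr r'"
  shows "ffun r t < ffun r' t"
proof -
  have "0 < 1 - r' - 3*t" using assms unfolding kr_def by simp
  hence "2/(3*(1 - r - 3*t)) < 2/(3*(1 - r' - 3*t))" using assms by (intro divide_strict_left_mono) auto
  moreover have "ln_ratio t > 0" using ln_ratio_pos assms unfolding kr_def by simp
  ultimately show ?thesis unfolding ffun_def ln_ratio_def[symmetric] by (rule mult_strict_right_mono)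
qed

lemma ffun_m0_strict_mono:
  assumes "0 < r" "r < r'" "r' < 1"
  shows "ffun r (m0 r) < ffun r' (m0 r')"
proof -
  have "m0 r' < kr r" using m0[of r'] assms unfolding kr_def by simp
  hence "ffun r (m0 r) \<le> ffun r (m0 r')" using ffun_m0_le[of r "m0 r'"] m0[of r'] assms by simp
  also have "\<dots> < ffun r' (m0 r')" using ffun_strict_mono_in_r[of r r' "m0 r'"] m0[of r'] assms by simp
  finally show ?thesis .
qed

lemma ffun_eq_above_third_exists:
  assumes "\<beta> > 2" "0 < r"
  shows "\<exists>t. 1/3 < t \<and> t < 1/2 \<and> ffun r t = \<beta>"
proof -
  define M where "M = \<beta> * (3/4 + 3*r/2 + 1)"
  define E where "E = exp (-M)"
  define t1 where "t1 = 1/(2 + E)"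
  have "0 < E" "E < 1" using assms unfolding M_def E_def by auto
  hence t1: "1/3 < t1" "t1 < 1/2" unfolding t1_def by (auto simp: field_simps)
  have "(1 - 2*t1)/t1 = E" unfolding t1_def using \<open>0 < E\<close> by (simp add: field_simps)
  hence "ln_ratio t1 = -M" unfolding ln_ratio_def E_def by simp
  hence "psi \<beta> r t1 = 3/2 * (1 - r - 3*t1) + (3/4 + 3*r/2 + 1)"
    unfolding psi_def M_def using assms by simp
  hence "psi \<beta> r t1 > 0" using t1 by (simp add: field_simps)
  moreover have "psi \<beta> r (1/3) < 0" unfolding psi_def ln_ratio_third using assms by simp
  moreover have "continuous_on {1/3..t1} (psi \<beta> r)" unfolding psi_def
    by (intro continuous_intros continuous_on_ln_ratio) (use t1 assms in auto)
  ultimately obtain t where t: "1/3 \<le> t" "t \<le> t1" "psi \<beta> r t = 0"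
    using IVT'[of "psi \<beta> r" "1/3" 0 t1] t1 by auto
  moreover have "t \<noteq> 1/3"
  proof
    assume "t = 1/3"
    thus False using arg_cong[of t "1/3" "psi \<beta> r"] t(3) \<open>psi \<beta> r (1/3) < 0\<close> by linarith
  qed
  ultimately have "1/3 < t" "t < 1/2" using t1 by auto
  hence "1 - r - 3*t \<noteq> 0" using assms by simp
  hence "3/2 * (1 - r - 3*t) * (1 - ffun r t/\<beta>) = 0" using psi_eq_ffun[of r t \<beta>] t assms by simp
  hence "ffun r t = \<beta>" using \<open>1 - r - 3*t \<noteq> 0\<close> assms by simp
  thus ?thesis using \<open>1/3 < t\<close> \<open>t < 1/2\<close> by blast
qed

lemma qb:
  assumes "\<beta> > 2" "0 < r"
  shows "1/3 < qb \<beta> r" "qb \<beta> r < 1/2" "ffun r (qb \<beta> r) = \<beta>"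
proof -
  have "t = t'" if "1/3 < t" "t < 1/2" "ffun r t = \<beta>" "1/3 < t'" "t' < 1/2" "ffun r t' = \<beta>" for t t'
    using ffun_strict_mono_above_third[of r t t'] ffun_strict_mono_above_third[of r t' t] that assms
    by (cases t t' rule: linorder_cases) auto
  hence "\<exists>!t. 1/3 < t \<and> t < 1/2 \<and> ffun r t = \<beta>"
    using ffun_eq_above_third_exists[OF assms] by blast
  hence "1/3 < qb \<beta> r \<and> qb \<beta> r < 1/2 \<and> ffun r (qb \<beta> r) = \<beta>"
    unfolding qb_def by (rule theI')
  thus "1/3 < qb \<beta> r" "qb \<beta> r < 1/2" "ffun r (qb \<beta> r) = \<beta>" by auto
qed

lemma psi_sign_above_third:
  assumes "\<beta> > 2" "0 < r" "1/3 < t" "t < 1/2"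
  shows "t < qb \<beta> r \<Longrightarrow> psi \<beta> r t < 0" and "qb \<beta> r < t \<Longrightarrow> psi \<beta> r t > 0"
proof -
  have D: "1 - r - 3*t < 0" using assms by simp
  hence psi_eq: "psi \<beta> r t = 3/2 * (1 - r - 3*t) * (1 - ffun r t/\<beta>)"
    using psi_eq_ffun[of r t \<beta>] assms by simp
  show "t < qb \<beta> r \<Longrightarrow> psi \<beta> r t < 0"
  proof -
    assume "t < qb \<beta> r"
    hence "ffun r t < \<beta>" using ffun_strict_mono_above_third[of r t "qb \<beta> r"] qb[OF assms(1,2)] assms by simp
    hence "1 - ffun r t/\<beta> > 0" using assms by (simp add: field_simps)
    thus ?thesis unfolding psi_eq using D by (simp add: mult_neg_pos)
  qed
  show "qb \<beta> r < t \<Longrightarrow> psi \<beta> r t > 0"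
  proof -
    assume "qb \<beta> r < t"
    hence "ffun r t > \<beta>" using ffun_strict_mono_above_third[of r "qb \<beta> r" t] qb[OF assms(1,2)] assms by simp
    hence "1 - ffun r t/\<beta> < 0" using assms by (simp add: field_simps)
    thus ?thesis unfolding psi_eq using D by (simp add: mult_neg_neg)
  qed
qed

lemma phi_qb_le:
  assumes "\<beta> > 2" "0 < r" "1/3 < t" "t < 1/2"
  shows "phi \<beta> r (qb \<beta> r) \<le> phi \<beta> r t"
proof (cases "t \<le> qb \<beta> r")
  case True
  show ?thesis
  proof (rule DERIV_nonpos_imp_decreasing_open[OF True])
    fix x assume x: "t < x" "x < qb \<beta> r"
    hence "psi \<beta> r x < 0" using psi_sign_above_third(1)[of \<beta> r x] qb[OF assms(1,2)] assms by simp
    thus "\<exists>y. DERIV (phi \<beta> r) x :> y \<and> y \<le> 0"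
      using phi_has_derivative[of x \<beta> r] x qb[OF assms(1,2)] assms by fastforce
  qed (rule continuous_on_phi, use qb[OF assms(1,2)] assms in auto)
next
  case False
  hence "qb \<beta> r \<le> t" by simp
  show ?thesis
  proof (rule DERIV_nonneg_imp_increasing_open[OF \<open>qb \<beta> r \<le> t\<close>])
    fix x assume x: "qb \<beta> r < x" "x < t"
    hence "psi \<beta> r x > 0" using psi_sign_above_third(2)[of \<beta> r x] qb[OF assms(1,2)] assms by simp
    thus "\<exists>y. DERIV (phi \<beta> r) x :> y \<and> y \<ge> 0"
      using phi_has_derivative[of x \<beta> r] x qb[OF assms(1,2)] assms by fastforce
  qed (rule continuous_on_phi, use qb[OF assms(1,2)] assms in auto)
qed

lemma ln_4_lt_3_halves: "ln 4 < (3/2 :: real)"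
proof -
  have "1 + 1/2 + (1/2)^2/2 \<le> exp (1/2 :: real)" by (rule exp_lower_Taylor_quadratic) simp
  moreover have "(1/2 :: real)^2/2 = 1/8" by (simp add: power2_eq_square)
  ultimately have "13/8 \<le> exp (1/2 :: real)" by linarith
  hence "(13/8)^3 \<le> exp (1/2 :: real) ^ 3" by (rule power_mono) simp
  also have "\<dots> = exp (3/2)" by (simp add: exp_of_nat_mult[symmetric])
  finally have "(13/8)^3 \<le> exp (3/2 :: real)" .
  moreover have "(4 :: real) < (13/8)^3" by (simp add: power3_eq_cube)
  ultimately have "4 < exp (3/2 :: real)" by linarith
  thus ?thesis by (metis exp_gt_zero ln_exp ln_less_cancel_iff zero_less_numeral)
qed

lemma hfun_pos_below_sixth:
  assumes "0 < t" "t \<le> 1/6"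
  shows "0 < hfun t"
proof -
  have "ln_ratio (1/6) = ln 4" unfolding ln_ratio_def by simp
  hence "hfun (1/6) = 1/2 - ln 4/3" unfolding hfun_def ln_ratio_def[symmetric] by simp
  hence "hfun (1/6) > 0" using ln_4_lt_3_halves by simp
  moreover have "hfun (1/6) \<le> hfun t"
  proof (cases "t = 1/6")
    case True
    show ?thesis unfolding True by simp
  next
    case False
    thus ?thesis using hfun_strict_antimono_below_quarter[of t "1/6"] assms by simp
  qed
  ultimately show ?thesis by simp
qed

text \<open>The witness is \<open>r = hfun t0\<close> for the \<open>t0 \<le> 1/6\<close> with \<open>t0 (1 - 2 t0) = 2/(9\<beta>)\<close>: there
  \<open>1 - r - 3 t0 = 3 t0 (1 - 2 t0) ln_ratio t0\<close>, which turns \<open>ffun r t0 = \<beta>\<close> into an identity.\<close>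

lemma ffun_m0_eq_exists:
  assumes "\<beta> > 2"
  shows "\<exists>r. 0 < r \<and> r < 1 \<and> ffun r (m0 r) = \<beta>"
proof -
  have "continuous_on {0..1/6} (\<lambda>t::real. t*(1 - 2*t))" by (intro continuous_intros)
  moreover have "0 * (1 - 2 * 0) \<le> 2/(9*\<beta>)" "2/(9*\<beta>) \<le> 1/6 * (1 - 2 * (1/6))"
    using assms by (auto simp: field_simps)
  ultimately obtain t0 where t0: "0 \<le> t0" "t0 \<le> 1/6" "t0*(1 - 2*t0) = 2/(9*\<beta>)"
    using IVT'[of "\<lambda>t::real. t*(1 - 2*t)" 0 "2/(9*\<beta>)" "1/6"] by auto
  have "0 < t0" using t0 assms by (cases "t0 = 0") auto
  have L: "ln_ratio t0 > 0" using ln_ratio_pos t0 \<open>0 < t0\<close> by simp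
  define r where "r = hfun t0"
  have "0 < r" unfolding r_def using hfun_pos_below_sixth \<open>0 < t0\<close> t0(2) by simp
  have "r = 1 - 3*t0 - 3*(t0*(1 - 2*t0)) * ln_ratio t0"
    unfolding r_def hfun_def ln_ratio_def by (simp add: algebra_simps)
  moreover have "0 < t0 * (1 - 2*t0)" using \<open>0 < t0\<close> t0(2) by simp
  ultimately have D: "1 - r - 3*t0 = 3 * (t0 * (1 - 2*t0)) * ln_ratio t0"
    "0 < 3 * (t0 * (1 - 2*t0)) * ln_ratio t0"
    using L by auto
  hence "3*t0 < 1 - r" by linarith
  hence "r < 1" "t0 < kr r" using \<open>0 < t0\<close> unfolding kr_def by simp_all
  hence "m0 r = t0" using m0_eqI[of r t0] \<open>0 < r\<close> \<open>0 < t0\<close> r_def by metis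
  moreover have "ffun r t0 = \<beta>"
    unfolding ffun_def ln_ratio_def[symmetric] D(1) t0(3) using L assms by (simp add: field_simps)
  ultimately show ?thesis using \<open>0 < r\<close> \<open>r < 1\<close> by auto
qed

lemma r2:
  assumes "\<beta> > 2"
  shows "0 < r2 \<beta>" "r2 \<beta> < 1" "ffun (r2 \<beta>) (m0 (r2 \<beta>)) = \<beta>"
proof -
  have "r = r'" if "0 < r" "r < 1" "ffun r (m0 r) = \<beta>" "0 < r'" "r' < 1" "ffun r' (m0 r') = \<beta>" for r r'
    using ffun_m0_strict_mono[of r r'] ffun_m0_strict_mono[of r' r] that
    by (cases r r' rule: linorder_cases) auto
  hence "\<exists>!r. 0 < r \<and> r < 1 \<and> ffun r (m0 r) = \<beta>"
    using ffun_m0_eq_exists[OF assms] by blast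
  hence "0 < r2 \<beta> \<and> r2 \<beta> < 1 \<and> ffun (r2 \<beta>) (m0 (r2 \<beta>)) = \<beta>"
    unfolding r2_def by (rule theI')
  thus "0 < r2 \<beta>" "r2 \<beta> < 1" "ffun (r2 \<beta>) (m0 (r2 \<beta>)) = \<beta>" by auto
qed

lemma ffun_eq_m0_kr_exists:
  assumes "\<beta> > 0" "0 < r" "r < 1" "ffun r (m0 r) < \<beta>"
  shows "\<exists>u. m0 r < u \<and> u < kr r \<and> ffun r u = \<beta>"
proof -
  note m0 = m0[OF assms(2,3)] and kr = kr_bounds[OF assms(2,3)]
  define K where "K = ln_ratio (kr r)"
  have "K > 0" unfolding K_def using ln_ratio_pos kr by simp
  define d where "d = min (3*(kr r - m0 r)/2) (K/(3*\<beta>))"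
  have "0 < d" unfolding d_def using m0 \<open>K > 0\<close> assms by auto
  have "d \<le> 3*(kr r - m0 r)/2" "d \<le> K/(3*\<beta>)"
    unfolding d_def by (rule min.cobounded1, rule min.cobounded2)
  define t2 where "t2 = kr r - d/3"
  have t2: "m0 r < t2" "t2 < kr r" "1 - r - 3*t2 = d"
    unfolding t2_def using \<open>0 < d\<close> \<open>d \<le> 3*(kr r - m0 r)/2\<close> m0 by (auto simp: kr_def field_simps)
  have "K \<le> ln_ratio t2" using ln_ratio_strict_antimono[of t2 "kr r"] t2 m0 kr unfolding K_def by simp
  have "\<beta> \<le> 2/(3*d) * K" using \<open>0 < d\<close> \<open>d \<le> K/(3*\<beta>)\<close> \<open>K > 0\<close> assms by (simp add: field_simps)
  also have "\<dots> \<le> 2/(3*d) * ln_ratio t2" using \<open>K \<le> ln_ratio t2\<close> \<open>0 < d\<close> by (intro mult_left_mono) auto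
  also have "\<dots> = ffun r t2" unfolding ffun_def ln_ratio_def t2(3) ..
  finally have "\<beta> \<le> ffun r t2" .
  moreover have "continuous_on {m0 r..t2} (ffun r)"
    by (rule continuous_on_ffun) (use m0 t2 kr in \<open>auto simp: kr_def\<close>)
  ultimately obtain u where u: "m0 r \<le> u" "u \<le> t2" "ffun r u = \<beta>"
    using IVT'[of "ffun r" "m0 r" \<beta> t2] assms(4) t2 by auto
  hence "m0 r < u" "u < kr r" using assms(4) t2 by (auto simp: order.order_iff_strict)
  thus ?thesis using u by blast
qed

lemma ub:
  assumes "\<beta> > 2" "0 < r" "r < r2 \<beta>"
  shows "m0 r < ub \<beta> r" "ub \<beta> r < kr r" "ffun r (ub \<beta> r) = \<beta>"
proof -
  have "r < 1" using assms r2[OF assms(1)] by simp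
  have "ffun r (m0 r) < \<beta>" using ffun_m0_strict_mono[of r "r2 \<beta>"] r2[OF assms(1)] assms by simp
  have "t = t'" if "m0 r < t" "t < kr r" "ffun r t = \<beta>" "m0 r < t'" "t' < kr r" "ffun r t' = \<beta>" for t t'
    using ffun_strict_mono_m0_kr[of r t t'] ffun_strict_mono_m0_kr[of r t' t] that assms \<open>r < 1\<close>
    by (cases t t' rule: linorder_cases) auto
  hence "\<exists>!t. m0 r < t \<and> t < kr r \<and> ffun r t = \<beta>"
    using ffun_eq_m0_kr_exists[of \<beta> r] \<open>ffun r (m0 r) < \<beta>\<close> \<open>r < 1\<close> assms by auto
  hence "m0 r < ub \<beta> r \<and> ub \<beta> r < kr r \<and> ffun r (ub \<beta> r) = \<beta>"
    unfolding ub_def by (rule theI')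
  thus "m0 r < ub \<beta> r" "ub \<beta> r < kr r" "ffun r (ub \<beta> r) = \<beta>" by auto
qed

definition split_energy :: "real \<Rightarrow> real \<Rightarrow> real \<Rightarrow> real \<Rightarrow> real" where
  "split_energy \<beta> a w z = Pb \<beta> z + Pb \<beta> (w - z) + a * z"

lemma split_energy_has_derivative:
  assumes "0 < z" "z < w" "\<beta> \<noteq> 0"
  shows "DERIV (split_energy \<beta> a w) z :> Gb \<beta> z - Gb \<beta> (w - z) + a"
proof -
  have "0 < w - z" using assms by simp
  have "DERIV (\<lambda>z. w - z) z :> -1" by (auto intro!: derivative_eq_intros)
  from DERIV_chain2[OF Pb_has_derivative[OF \<open>0 < w - z\<close> assms(3)] this]
  have "DERIV (split_energy \<beta> a w) z :> (Gb \<beta> z + 1/\<beta>) + (Gb \<beta> (w - z) + 1/\<beta>) * (-1) + a"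
    unfolding split_energy_def
    by (intro DERIV_add Pb_has_derivative[OF assms(1,3)]) (auto intro!: derivative_eq_intros)
  thus ?thesis by simp
qed

lemma continuous_on_split_energy:
  assumes "0 < c" "d < w" "\<beta> \<noteq> 0"
  shows "continuous_on {c..d} (split_energy \<beta> a w)"
proof (rule DERIV_atLeastAtMost_imp_continuous_on)
  fix x assume "c \<le> x" "x \<le> d"
  thus "\<exists>y. DERIV (split_energy \<beta> a w) x :> y"
    using split_energy_has_derivative[of x w \<beta> a] assms by auto
qed

text \<open>Both \<open>k0\<close> and \<open>k1\<close> lie on the decreasing branch of \<open>Gb\<close>, so the derivative
  \<open>Gb z - Gb (w - z) + a\<close> vanishes at \<open>k0\<close> and has the sign of \<open>k0 - z\<close> between \<open>k0\<close> and the midpoint.\<close>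

lemma split_energy_midpoint_le:
  assumes "\<beta> > 2" "lb \<beta> \<le> k0" "lb \<beta> \<le> k1" "Gb \<beta> k1 = Gb \<beta> k0 + a"
  defines "w \<equiv> k0 + k1"
  shows "split_energy \<beta> a w (w/2) \<le> split_energy \<beta> a w k0"
proof -
  have Gb_antimono: "Gb \<beta> x' \<le> Gb \<beta> x" if "lb \<beta> \<le> x" "x \<le> x'" for x x'
    using Gb_strict_antimono_above_lb[of \<beta> x x'] that assms(1) by (cases "x = x'") auto
  have "0 < lb \<beta>" using lb_pos assms(1) by simp
  show ?thesis
  proof (cases "w/2 \<le> k0")
    case True
    show ?thesis
    proof (rule DERIV_nonneg_imp_increasing_open[OF True])
      fix z assume z: "w/2 < z" "z < k0"
      have "Gb \<beta> k0 \<le> Gb \<beta> z" "Gb \<beta> (w - z) \<le> Gb \<beta> k1"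
        using Gb_antimono[of z k0] Gb_antimono[of k1 "w - z"] z assms unfolding w_def by auto
      hence "Gb \<beta> z - Gb \<beta> (w - z) + a \<ge> 0" using assms(4) by simp
      thus "\<exists>y. DERIV (split_energy \<beta> a w) z :> y \<and> y \<ge> 0"
        using split_energy_has_derivative[of z w \<beta> a] z assms \<open>0 < lb \<beta>\<close> unfolding w_def by auto
    qed (rule continuous_on_split_energy, use assms \<open>0 < lb \<beta>\<close> in \<open>auto simp: w_def\<close>)
  next
    case False
    hence "k0 \<le> w/2" by simp
    show ?thesis
    proof (rule DERIV_nonpos_imp_decreasing_open[OF \<open>k0 \<le> w/2\<close>])
      fix z assume z: "k0 < z" "z < w/2"
      have "Gb \<beta> z \<le> Gb \<beta> k0" "Gb \<beta> k1 \<le> Gb \<beta> (w - z)"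
        using Gb_antimono[of k0 z] Gb_antimono[of "w - z" k1] z assms unfolding w_def by auto
      hence "Gb \<beta> z - Gb \<beta> (w - z) + a \<le> 0" using assms(4) by simp
      thus "\<exists>y. DERIV (split_energy \<beta> a w) z :> y \<and> y \<le> 0"
        using split_energy_has_derivative[of z w \<beta> a] z assms \<open>0 < lb \<beta>\<close> unfolding w_def by auto
    qed (rule continuous_on_split_energy, use assms \<open>0 < lb \<beta>\<close> in \<open>auto simp: w_def\<close>)
  qed
qed

lemma Fbeta_eq_split_energy:
  assumes "0 < x1" "0 < x2" "0 < 1 - x1 - x2"
  shows "Fbeta \<beta> (x1, x2) r
    = 1/4 - r/2 + ln 3/\<beta> + Pb \<beta> x2 + split_energy \<beta> (3*r/2) (1 - x2) (1 - x1 - x2)"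
  using Fbeta_eq_Pb_sum[OF assms, of \<beta> r] unfolding split_energy_def by simp

lemma Fbeta_swap_x0_x2:
  assumes "0 < x1" "0 < x2" "0 < 1 - x1 - x2"
  shows "Fbeta \<beta> (x1, 1 - x1 - x2) r = Fbeta \<beta> (x1, x2) r + 3*r/2 * (x2 - (1 - x1 - x2))"
  using Fbeta_eq_Pb_sum[OF assms, of \<beta> r] Fbeta_eq_Pb_sum[of x1 "1 - x1 - x2" \<beta> r] assms
  by (simp add: field_simps)

lemma Fbeta_sigma0_lt_sigma1:
  assumes "\<beta> > 2" "0 < r" "r < r1 \<beta>"
  shows "Fbeta \<beta> (sigma0 \<beta> r) r < Fbeta \<beta> (sigma1 \<beta> r) r"
proof -
  define y h k0 k1 where "y = y1 \<beta> r" and "h = Hb \<beta> y"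
    and "k0 = Kb \<beta> (y - 3*r/2)" and "k1 = Kb \<beta> y"
  have "y \<le> gb \<beta>" "k0 + h + k1 = 1"
    using y1[OF assms] unfolding y_def h_def k0_def k1_def HK_sum_def by auto
  note H = Hb[of \<beta> y, folded h_def] and K0 = Kb[of \<beta> "y - 3*r/2", folded k0_def]
    and K1 = Kb[of \<beta> y, folded k1_def]
  have "0 < lb \<beta>" "3 * lb \<beta> < 1" using lb_pos lb_lt_third assms by auto
  hence "0 < h" "0 < k0" "0 < k1" "h \<le> lb \<beta>" using H K0 K1 \<open>y \<le> gb \<beta>\<close> assms by auto
  define t where "t = (k0 + k1)/2"
  have "2*t = k0 + k1" unfolding t_def by simp
  hence t: "1/3 < t" "t < 1/2" "h < t" "1 - t - h = t" "1 - k1 - h = k0"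
    using \<open>k0 + h + k1 = 1\<close> \<open>0 < h\<close> \<open>h \<le> lb \<beta>\<close> \<open>3 * lb \<beta> < 1\<close> by linarith+
  have "Fbeta \<beta> (sigma0 \<beta> r) r \<le> Fbeta \<beta> (t, t) r"
    using Fbeta_diagonal[of t \<beta> r] Fbeta_diagonal[of "qb \<beta> r" \<beta> r] phi_qb_le[OF assms(1,2) t(1,2)]
      qb[OF assms(1,2)] t unfolding sigma0_def by simp
  also have "\<dots> < Fbeta \<beta> (t, h) r"
    using Fbeta_swap_x0_x2[of t h \<beta> r] t \<open>0 < h\<close> assms by (simp add: mult_pos_neg)
  also have "\<dots> = 1/4 - r/2 + ln 3/\<beta> + Pb \<beta> h + split_energy \<beta> (3*r/2) (1 - h) t"
    using Fbeta_eq_split_energy[of t h \<beta> r] t \<open>0 < h\<close> by simp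
  also have "\<dots> \<le> 1/4 - r/2 + ln 3/\<beta> + Pb \<beta> h + split_energy \<beta> (3*r/2) (1 - h) k0"
  proof -
    have "1 - h = k0 + k1" using \<open>k0 + h + k1 = 1\<close> by linarith
    thus ?thesis using split_energy_midpoint_le[of \<beta> k0 k1 "3*r/2"] K0 K1 \<open>y \<le> gb \<beta>\<close> assms
      unfolding t_def by simp
  qed
  also have "\<dots> = Fbeta \<beta> (sigma1 \<beta> r) r"
    using Fbeta_eq_split_energy[of k1 h \<beta> r] t \<open>0 < h\<close> \<open>0 < k0\<close> \<open>0 < k1\<close>
    unfolding sigma1_def y_def[symmetric] h_def[symmetric] k1_def[symmetric] by simp
  finally show ?thesis .
qed

lemma psi_neg_kr_to_third:
  assumes "\<beta> > 0" "0 < r" "r < 1" "kr r \<le> x" "x \<le> 1/3"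
  shows "psi \<beta> r x < 0"
proof (cases "x = 1/3")
  case True
  show ?thesis unfolding psi_def True ln_ratio_third using assms by simp
next
  case False
  hence "ln_ratio x > 0" using ln_ratio_pos[of x] assms kr_bounds[of r] by (auto simp: kr_def)
  moreover have "3/2 * (1 - r - 3*x) \<le> 0" using assms by (simp add: kr_def)
  moreover have "ln_ratio x / \<beta> > 0" using \<open>ln_ratio x > 0\<close> assms by simp
  ultimately show ?thesis unfolding psi_def by linarith
qed

lemma psi_neg_ub_to_qb:
  assumes "\<beta> > 2" "0 < r" "r < r2 \<beta>" "ub \<beta> r < x" "x < qb \<beta> r"
  shows "psi \<beta> r x < 0"
proof -
  have "r < 1" using r2[OF assms(1)] assms by simp
  consider "x < kr r" | "kr r \<le> x" "x \<le> 1/3" | "1/3 < x" by linarith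
  thus ?thesis
  proof cases
    case 1
    have D: "1 - r - 3*x > 0" using 1 by (simp add: kr_def)
    have "ffun r x > \<beta>"
      using ffun_strict_mono_m0_kr[of r "ub \<beta> r" x] ub[OF assms(1-3)] 1 assms \<open>r < 1\<close> by simp
    hence "1 - ffun r x/\<beta> < 0" using assms by (simp add: field_simps)
    hence "3/2 * (1 - r - 3*x) * (1 - ffun r x/\<beta>) < 0" using D by (simp add: mult_pos_neg)
    thus ?thesis using psi_eq_ffun[of r x \<beta>] D assms by simp
  next
    case 2
    thus ?thesis using psi_neg_kr_to_third assms \<open>r < 1\<close> by simp
  next
    case 3
    thus ?thesis using psi_sign_above_third(1)[of \<beta> r x] qb[OF assms(1,2)] assms by simp
  qed
qed

lemma Fbeta_sigma0_lt_pb: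
  assumes "\<beta> > 2" "0 < r" "r < r2 \<beta>"
  shows "Fbeta \<beta> (sigma0 \<beta> r) r < Fbeta \<beta> (pb \<beta> r) r"
proof -
  have "r < 1" using r2[OF assms(1)] assms by simp
  define u q where "u = ub \<beta> r" and "q = qb \<beta> r"
  have "0 < u" "u < q" "q < 1/2"
    using ub[OF assms] qb[OF assms(1,2)] m0[OF assms(2) \<open>r < 1\<close>] kr_bounds[OF assms(2) \<open>r < 1\<close>]
    unfolding u_def q_def by auto
  have "phi \<beta> r q < phi \<beta> r u"
  proof (rule DERIV_neg_imp_decreasing_open[OF \<open>u < q\<close>])
    fix x assume "u < x" "x < q"
    thus "\<exists>y. DERIV (phi \<beta> r) x :> y \<and> y < 0"
      using phi_has_derivative[of x \<beta> r] psi_neg_ub_to_qb[of \<beta> r x] \<open>0 < u\<close> \<open>q < 1/2\<close> assms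
      unfolding u_def q_def by force
  qed (rule continuous_on_phi, use \<open>0 < u\<close> \<open>q < 1/2\<close> assms in auto)
  thus ?thesis
    using Fbeta_diagonal[of q \<beta> r] Fbeta_diagonal[of u \<beta> r] \<open>0 < u\<close> \<open>u < q\<close> \<open>q < 1/2\<close>
    unfolding sigma0_def pb_def q_def[symmetric] u_def[symmetric] by simp
qed

theorem lemma5p10:
  fixes \<beta> r :: real
  assumes "\<beta> > 2"
    and "(0 < r \<and> r < r1 \<beta>) \<or> (r1 \<beta> < r \<and> r < r2 \<beta>)"
  shows "Fbeta \<beta> (sigma0 \<beta> r) r <
         (if r < r1 \<beta> then Fbeta \<beta> (sigma1 \<beta> r) r else Fbeta \<beta> (pb \<beta> r) r)"
  using Fbeta_sigma0_lt_sigma1[OF assms(1)] Fbeta_sigma0_lt_pb[OF assms(1)] r1_pos[OF assms(1)] assms(2)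
  by auto

end
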